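(* Let $N,d\ge1$, $T>0$, and fix initial data $x(0),v(0)\in\mathbb{R}^{Nd}$. For each $n\ge2$ let $x^n$ be the solution on $[0,T]$ of the system $\dot x^n_i=v^n_i$, $\dot v^n_i=\frac1N\sum_{k=1}^N(v^n_k-v^n_i)\psi_n(|x^n_i-x^n_k|)$ with initial data $x^n(0)=x(0)$, $v^n(0)=v(0)$ (independent of $n$). Then there exists an interval $[0,t]$, $t>0$, on which all velocities $v^n$ are uniformly (in $n$) Hölder continuous.
   Context: $\alpha\in(0,1)$, $\psi(s)=s^{-\alpha}$ for $s>0$, $\psi(0)=0$. For each $n$, $\psi_n(s)=\psi(s)$ for $s\ge (n-1)^{-1/\alpha}$, $\psi_n(s)=n$ for $s\le n^{-1/\alpha}$, and $\psi_n$ is smooth and monotone on $[n^{-1/\alpha},(n-1)^{-1/\alpha}]$; the system then has a unique global $C^2$ solution. *)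

theory Defs
  imports "HOL-Analysis.Analysis"
begin

definition smooth_on :: "real set \<Rightarrow> (real \<Rightarrow> real) \<Rightarrow> bool" where
  "smooth_on S f \<longleftrightarrow>
     (\<exists>D :: nat \<Rightarrow> real \<Rightarrow> real. D 0 = f \<and>
        (\<forall>k. \<forall>s\<in>S. (D k has_real_derivative D (Suc k) s) (at s within S)))"

end

theory Submission
  imports Defs
begin

text \<open>The kinetic energy is nonincreasing, so all velocities stay bounded by a constant W
  independent of n. Pairs of particles with the same initial position and velocity coincide for
  all time. For the other pairs, up to a time t independent of n: distinct initial positions
  stay at distance at least d/2, while equal initial positions with velocities differing by at
  least c separate at least like c r/2, as long as no velocity has moved by c/4. Since
  psi_n(s) \<le> 2 s^(-\<alpha>), the force is then O(r^(-\<alpha>)), whose integral K r^(1-\<alpha>)/(1-\<alpha>)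
  is below c/8 for small t; a first-exit-time argument shows that the velocities indeed stay
  c/4-close to their initial values, and the same bound yields Hoelder continuity
  with exponent 1-\<alpha>.\<close>

lemma norm_increment_le_comparison:
  fixes f :: "real \<Rightarrow> 'a::real_inner" and g :: "real \<Rightarrow> real"
  assumes "a \<le> b" and "continuous_on {a..b} f" and "continuous_on {a..b} g"
    and f': "\<And>r. a < r \<Longrightarrow> r < b \<Longrightarrow> (f has_vector_derivative f' r) (at r)"
    and g': "\<And>r. a < r \<Longrightarrow> r < b \<Longrightarrow> (g has_real_derivative g' r) (at r)"
    and bound: "\<And>r. a < r \<Longrightarrow> r < b \<Longrightarrow> norm (f' r) \<le> g' r"
  shows "norm (f b - f a) \<le> g b - g a"
proof -
  define u where "u = sgn (f b - f a)"
  have "inner (f b) u - g b \<le> inner (f a) u - g a"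
  proof (rule DERIV_nonpos_imp_decreasing_open[OF \<open>a \<le> b\<close>])
    fix r assume r: "a < r" "r < b"
    have "((\<lambda>r. inner (f r) u) has_real_derivative inner (f' r) u) (at r)"
      using bounded_linear.has_vector_derivative[OF bounded_linear_inner_left f'[OF r]]
      by (simp add: has_real_derivative_iff_has_vector_derivative)
    then have "((\<lambda>r. inner (f r) u - g r) has_real_derivative inner (f' r) u - g' r) (at r)"
      by (intro DERIV_diff g' r)
    moreover have "inner (f' r) u \<le> g' r"
    proof -
      have "inner (f' r) u \<le> norm (f' r) * norm u"
        by (rule norm_cauchy_schwarz)
      also have "\<dots> \<le> norm (f' r)"
        by (simp add: u_def norm_sgn mult_left_le)
      finally show ?thesis
        using bound[OF r] by linarith
    qed
    ultimately show "\<exists>y. ((\<lambda>r. inner (f r) u - g r) has_real_derivative y) (at r) \<and> y \<le> 0"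
      by auto
  qed (intro continuous_intros assms)+
  moreover have "inner (f b - f a) u = norm (f b - f a)"
    by (cases "f b = f a")
      (simp_all add: u_def sgn_div_norm power2_eq_square flip: power2_norm_eq_inner)
  ultimately show ?thesis
    by (simp add: inner_diff_left)
qed

lemma DERIV_within_nonpos_imp_decreasing:
  fixes f :: "real \<Rightarrow> real"
  assumes "a \<le> b"
    and f': "\<And>r. r \<in> {a..b} \<Longrightarrow> (f has_real_derivative f' r) (at r within {a..b})"
    and "\<And>r. r \<in> {a..b} \<Longrightarrow> f' r \<le> 0"
  shows "f b \<le> f a"
proof (rule DERIV_nonpos_imp_decreasing_open[OF \<open>a \<le> b\<close>])
  show "continuous_on {a..b} f"
    using f' by (rule DERIV_continuous_on)
  fix r assume "a < r" "r < b"
  then show "\<exists>y. (f has_real_derivative y) (at r) \<and> y \<le> 0"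
    using f'[of r] assms(3)[of r] by (auto simp: at_within_Icc_at)
qed

lemma gronwall_nonpos:
  fixes q :: "real \<Rightarrow> real"
  assumes q': "\<And>r. r \<in> {0..T} \<Longrightarrow> (q has_real_derivative q' r) (at r within {0..T})"
    and growth: "\<And>r. r \<in> {0..T} \<Longrightarrow> q' r \<le> K * q r"
    and "q 0 \<le> 0" and s: "s \<in> {0..T}"
  shows "q s \<le> 0"
proof -
  define h where "h r = exp (- K * r) * q r" for r
  have "h s \<le> h 0"
  proof (rule DERIV_within_nonpos_imp_decreasing[of 0 s h "\<lambda>r. exp (- K * r) * (q' r - K * q r)"])
    fix r assume r: "r \<in> {0..s}"
    then have "(q has_real_derivative q' r) (at r within {0..s})"
      using q'[of r] s by (auto intro: DERIV_subset)
    then show "(h has_real_derivative exp (- K * r) * (q' r - K * q r)) (at r within {0..s})"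
      unfolding h_def[abs_def] by (auto intro!: derivative_eq_intros simp: algebra_simps)
    show "exp (- K * r) * (q' r - K * q r) \<le> 0"
      using growth[of r] r s by (simp add: mult_nonneg_nonpos)
  qed (use s in auto)
  then have "exp (- K * s) * q s \<le> 0"
    using \<open>q 0 \<le> 0\<close> by (simp add: h_def)
  then show ?thesis
    by (simp add: mult_le_0_iff)
qed

lemma powr_add_le_add_powr:
  fixes a b p :: real
  assumes a: "0 \<le> a" and b: "0 \<le> b" and p: "0 < p" "p \<le> 1"
  shows "(a + b) powr p \<le> a powr p + b powr p"
proof (cases "a + b = 0")
  case True
  then show ?thesis using a b by simp
next
  case False
  then have ab: "0 < a + b" using a b by linarith
  have le_powr: "y \<le> y powr p" if "0 \<le> y" "y \<le> 1" for y :: real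
    using powr_mono'[of p 1 y] that p by (cases "y = 0") auto
  have "1 = a / (a + b) + b / (a + b)"
    using ab by (simp add: add_divide_distrib[symmetric])
  also have "\<dots> \<le> (a / (a + b)) powr p + (b / (a + b)) powr p"
    using a b ab by (intro add_mono le_powr) auto
  also have "\<dots> = (a powr p + b powr p) / (a + b) powr p"
    using a b by (simp add: powr_divide add_divide_distrib)
  finally show ?thesis
    using ab by (simp add: le_divide_eq)
qed

lemma powr_diff_le_powr_diff:
  fixes s s' p :: real
  assumes "0 \<le> s'" "s' \<le> s" "0 < p" "p \<le> 1"
  shows "s powr p - s' powr p \<le> (s - s') powr p"
  using powr_add_le_add_powr[of "s - s'" s' p] assms by simp

lemma ex_pos_le_norm_diff:
  fixes u :: "nat \<Rightarrow> 'a::real_normed_vector"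
  shows "\<exists>c>0. \<forall>i<N. \<forall>k<N. u i \<noteq> u k \<longrightarrow> c \<le> norm (u i - u k)"
proof -
  define S where "S = {norm (u i - u k) |i k. i < N \<and> k < N \<and> u i \<noteq> u k}"
  have "S \<subseteq> (\<lambda>(i, k). norm (u i - u k)) ` ({..<N} \<times> {..<N})"
    unfolding S_def by auto
  then have "finite S"
    by (rule finite_subset) auto
  define c where "c = Min (insert 1 S)"
  have "c \<in> insert 1 S"
    unfolding c_def using \<open>finite S\<close> by (intro Min_in) auto
  then have "c > 0"
    unfolding S_def by auto
  moreover have "c \<le> norm (u i - u k)" if "i < N" "k < N" "u i \<noteq> u k" for i k
    unfolding c_def using \<open>finite S\<close> that by (intro Min_le) (auto simp: S_def)
  ultimately show ?thesis by blast
qed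

lemma sum_sum_symmetric_inner_diff_nonpos:
  fixes w :: "nat \<Rightarrow> nat \<Rightarrow> real" and u :: "nat \<Rightarrow> 'a::real_inner"
  assumes sym: "\<And>i k. w i k = w k i" and nonneg: "\<And>i k. 0 \<le> w i k"
  shows "(\<Sum>i<N. \<Sum>k<N. w i k * inner (u i) (u k - u i)) \<le> 0"
proof -
  let ?S = "\<Sum>i<N. \<Sum>k<N. w i k * inner (u i) (u k - u i)"
  have "?S = (\<Sum>i<N. \<Sum>k<N. w i k * inner (u k) (u i - u k))"
    using sum.swap[of "\<lambda>i k. w i k * inner (u i) (u k - u i)"] sym by simp
  then have "?S + ?S = ?S + (\<Sum>i<N. \<Sum>k<N. w i k * inner (u k) (u i - u k))"
    by simp
  also have "\<dots> = (\<Sum>i<N. \<Sum>k<N. w i k * (inner (u i) (u k - u i) + inner (u k) (u i - u k)))"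
    by (simp add: sum.distrib[symmetric] distrib_left)
  also have "\<dots> = (\<Sum>i<N. \<Sum>k<N. - (w i k * inner (u k - u i) (u k - u i)))"
    by (intro sum.cong refl) (simp add: inner_diff_left inner_diff_right inner_commute algebra_simps)
  also have "\<dots> \<le> 0"
    by (intro sum_nonpos) (simp add: nonneg)
  finally show ?thesis by simp
qed

lemma bounded_DERIV_imp_lipschitz_on:
  fixes f :: "real \<Rightarrow> real"
  assumes "convex S" "\<And>x. x \<in> S \<Longrightarrow> (f has_real_derivative f' x) (at x within S)"
    and "\<And>x. x \<in> S \<Longrightarrow> \<bar>f' x\<bar> \<le> B" "0 \<le> B"
  shows "B-lipschitz_on S f"
  using field_differentiable_bound[OF assms(1,2)] assms(3,4)
  by (intro lipschitz_onI) (auto simp: dist_norm)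

lemma lipschitz_on_concat_atLeast:
  fixes f :: "real \<Rightarrow> 'a::metric_space"
  assumes f: "L-lipschitz_on {a..b} f" and g: "L-lipschitz_on {b..} f"
  shows "L-lipschitz_on {a..} f"
proof (rule lipschitz_onI)
  fix x y assume "x \<in> {a..}" "y \<in> {a..}"
  have "L-lipschitz_on {a..max x y} (\<lambda>s. if s \<le> b then f s else f s)"
    by (intro lipschitz_on_concat f lipschitz_on_subset[OF g]) auto
  then show "dist (f x) (f y) \<le> L * dist x y"
    using \<open>x \<in> {a..}\<close> \<open>y \<in> {a..}\<close> by (auto intro: lipschitz_onD)
qed (rule lipschitz_on_nonneg[OF f])

lemma first_hitting_time:
  fixes f :: "'i \<Rightarrow> real \<Rightarrow> real"
  assumes "finite I" and cont: "\<And>i. i \<in> I \<Longrightarrow> continuous_on {a..b} (f i)"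
    and "i \<in> I" "s \<in> {a..b}" "\<epsilon> \<le> f i s"
  shows "\<exists>\<tau>\<in>{a..b}. (\<exists>i\<in>I. \<epsilon> \<le> f i \<tau>) \<and> (\<forall>s\<in>{a..<\<tau>}. \<forall>i\<in>I. f i s < \<epsilon>)"
proof -
  define B where "B = (\<Union>i\<in>I. {a..b} \<inter> f i -` {\<epsilon>..})"
  have "closed B"
    unfolding B_def using \<open>finite I\<close> cont
    by (intro closed_UN ballI continuous_closed_preimage) auto
  moreover have "s \<in> B"
    using assms(3-5) unfolding B_def by auto
  then have "B \<noteq> {}" by blast
  moreover have "bdd_below B"
    unfolding B_def by (auto intro: bdd_belowI[of _ a])
  ultimately have "Inf B \<in> B"
    by (rule closed_contains_Inf[rotated -1])
  moreover have "f j r < \<epsilon>" if "r \<in> {a..<Inf B}" "j \<in> I" for r j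
  proof (rule ccontr)
    assume "\<not> f j r < \<epsilon>"
    then have "r \<in> B"
      using that \<open>Inf B \<in> B\<close> unfolding B_def by (auto simp: not_less)
    then show False
      using cInf_lower[OF _ \<open>bdd_below B\<close>, of r] that by auto
  qed
  ultimately show ?thesis
    unfolding B_def by blast
qed

lemma ex_short_time:
  fixes T \<beta> c d K W :: real
  assumes "0 < T" "0 < \<beta>" "0 < c" "0 < d"
  shows "\<exists>t>0. t \<le> T \<and> t \<le> 1 \<and> W * t \<le> d \<and> K * t powr \<beta> \<le> c"
proof -
  have "\<forall>\<^sub>F t in at_right 0. 0 < t \<and> t \<le> T \<and> t \<le> 1 \<and> W * t \<le> d \<and> K * t powr \<beta> \<le> c"
    using assms by (intro eventually_conj; real_asymp)
  then show ?thesis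
    by (auto dest: eventually_happens)
qed

section \<open>The cut-off kernels\<close>

locale cutoff_kernel =
  fixes \<alpha> :: real and p :: "real \<Rightarrow> real" and n :: nat
  assumes alpha: "0 < \<alpha>" "\<alpha> < 1" and n: "2 \<le> n"
    and far: "\<And>s. (real n - 1) powr (- 1 / \<alpha>) \<le> s \<Longrightarrow> p s = s powr (- \<alpha>)"
    and near: "\<And>s. 0 \<le> s \<Longrightarrow> s \<le> real n powr (- 1 / \<alpha>) \<Longrightarrow> p s = real n"
    and smooth: "smooth_on {real n powr (- 1 / \<alpha>) .. (real n - 1) powr (- 1 / \<alpha>)} p"
    and antimono: "antimono_on {real n powr (- 1 / \<alpha>) .. (real n - 1) powr (- 1 / \<alpha>)} p"
begin

definition lo :: real where "lo = real n powr (- 1 / \<alpha>)"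
definition hi :: real where "hi = (real n - 1) powr (- 1 / \<alpha>)"

lemma lo_hi: "0 < lo" "lo < hi" "lo powr (- \<alpha>) = real n" "hi powr (- \<alpha>) = real n - 1"
  using n alpha by (auto simp: lo_def hi_def powr_powr intro!: powr_less_mono2_neg)

lemma antimono_between: "lo \<le> s \<Longrightarrow> s \<le> s' \<Longrightarrow> s' \<le> hi \<Longrightarrow> p s' \<le> p s"
  using antimono unfolding lo_def hi_def monotone_on_def by auto

lemma nonneg: "0 \<le> s \<Longrightarrow> 0 \<le> p s"
proof -
  assume "0 \<le> s"
  consider "s \<le> lo" | "lo \<le> s" "s \<le> hi" | "hi \<le> s" by linarith
  then show ?thesis
  proof cases
    case 1
    then show ?thesis using near[of s] \<open>0 \<le> s\<close> by (simp add: lo_def)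
  next
    case 2
    then have "p hi \<le> p s" by (intro antimono_between) auto
    moreover have "p hi = real n - 1" using far[of hi] lo_hi by (simp add: hi_def)
    ultimately show ?thesis using n by simp
  next
    case 3
    then show ?thesis using far[of s] by (simp add: hi_def)
  qed
qed

lemma le_twice_powr: "0 < s \<Longrightarrow> p s \<le> 2 * s powr (- \<alpha>)"
proof -
  assume "0 < s"
  consider "s \<le> lo" | "lo \<le> s" "s \<le> hi" | "hi \<le> s" by linarith
  then show ?thesis
  proof cases
    case 1
    then have "lo powr (- \<alpha>) \<le> s powr (- \<alpha>)"
      using \<open>0 < s\<close> alpha by (intro powr_mono2') auto
    then show ?thesis using near[of s] \<open>0 < s\<close> 1 lo_hi by (simp add: lo_def)
  next
    case 2
    then have "p s \<le> p lo" by (intro antimono_between) auto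
    moreover have "p lo = real n" using near[of lo] lo_hi by (simp add: lo_def)
    moreover have "hi powr (- \<alpha>) \<le> s powr (- \<alpha>)"
      using 2 lo_hi alpha by (intro powr_mono2') auto
    moreover have "2 \<le> real n" using n by simp
    ultimately show ?thesis using lo_hi(4) by linarith
  next
    case 3
    then show ?thesis using far[of s] by (simp add: hi_def)
  qed
qed

lemma lipschitz_between: "\<exists>B. B-lipschitz_on {lo..hi} p"
proof -
  obtain D :: "nat \<Rightarrow> real \<Rightarrow> real" where "D 0 = p"
    and D: "\<And>k s. s \<in> {lo..hi} \<Longrightarrow> (D k has_real_derivative D (Suc k) s) (at s within {lo..hi})"
    using smooth unfolding smooth_on_def lo_def hi_def by blast
  have "compact (D 1 ` {lo..hi})"
    using D[of _ 1] by (intro compact_continuous_image DERIV_continuous_on) auto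
  then obtain B where B: "\<And>s. s \<in> {lo..hi} \<Longrightarrow> \<bar>D 1 s\<bar> \<le> B"
    by (meson bounded_real compact_imp_bounded imageI)
  moreover have "0 \<le> B"
    using B[of lo] lo_hi by (meson abs_ge_zero atLeastAtMost_iff less_imp_le order_refl order_trans)
  ultimately have "B-lipschitz_on {lo..hi} (D 0)"
    using D[of _ 0] by (intro bounded_DERIV_imp_lipschitz_on[where f' = "D 1"]) auto
  then show ?thesis
    unfolding \<open>D 0 = p\<close> ..
qed

lemma lipschitz_far: "(\<alpha> * hi powr (- \<alpha> - 1))-lipschitz_on {hi..} p"
proof -
  have "(\<alpha> * hi powr (- \<alpha> - 1))-lipschitz_on {hi..} (\<lambda>s. s powr (- \<alpha>))"
  proof (rule bounded_DERIV_imp_lipschitz_on[where f' = "\<lambda>s. - \<alpha> * s powr (- \<alpha> - 1)"])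
    fix s assume "s \<in> {hi..}"
    then have "0 < s" using lo_hi by auto
    then show "((\<lambda>s. s powr - \<alpha>) has_real_derivative - \<alpha> * s powr (- \<alpha> - 1)) (at s within {hi..})"
      by (rule has_field_derivative_at_within[OF has_real_derivative_powr])
    have "s powr (- \<alpha> - 1) \<le> hi powr (- \<alpha> - 1)"
      using \<open>s \<in> {hi..}\<close> lo_hi alpha by (intro powr_mono2') auto
    then show "\<bar>- \<alpha> * s powr (- \<alpha> - 1)\<bar> \<le> \<alpha> * hi powr (- \<alpha> - 1)"
      using alpha by (simp add: abs_mult)
  qed (use alpha in auto)
  then show ?thesis
    by (rule lipschitz_on_transform) (auto simp: hi_def intro!: far)
qed

lemma lipschitz: "\<exists>L. L-lipschitz_on {0..} p"
proof -
  obtain B where B: "B-lipschitz_on {lo..hi} p"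
    using lipschitz_between by blast
  define L where "L = max B (\<alpha> * hi powr (- \<alpha> - 1))"
  have "0-lipschitz_on {0..lo} p"
    by (rule lipschitz_on_transform[OF lipschitz_on_constant[where c = "real n"]])
      (simp add: near lo_def)
  then have "L-lipschitz_on {0..lo} p"
    by (rule lipschitz_on_le) (use lipschitz_on_nonneg[OF B] in \<open>simp add: L_def\<close>)
  moreover have "L-lipschitz_on {lo..hi} p" "L-lipschitz_on {hi..} p"
    using lipschitz_on_le[OF B] lipschitz_on_le[OF lipschitz_far] by (auto simp: L_def)
  ultimately have "L-lipschitz_on {0..} p"
    using lipschitz_on_concat_atLeast[of L lo hi p] lipschitz_on_concat_atLeast[of L 0 lo p] by blast
  then show ?thesis ..
qed

end

section \<open>The Cucker-Smale system with a Lipschitz kernel\<close>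

locale cucker_smale =
  fixes N :: nat and T :: real and psi :: "real \<Rightarrow> real" and L :: real
    and x v :: "nat \<Rightarrow> real \<Rightarrow> 'a::real_inner"
  assumes N: "1 \<le> N"
    and psi_nonneg: "\<And>s. 0 \<le> s \<Longrightarrow> 0 \<le> psi s"
    and psi_lipschitz: "L-lipschitz_on {0..} psi"
    and ode_x: "\<And>i s. i < N \<Longrightarrow> s \<in> {0..T} \<Longrightarrow>
          (x i has_vector_derivative v i s) (at s within {0..T})"
    and ode_v: "\<And>i s. i < N \<Longrightarrow> s \<in> {0..T} \<Longrightarrow>
          (v i has_vector_derivative
             (1 / real N) *\<^sub>R (\<Sum>k<N. psi (norm (x i s - x k s)) *\<^sub>R (v k s - v i s)))
          (at s within {0..T})"
begin

definition force :: "nat \<Rightarrow> real \<Rightarrow> 'a" where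
  "force i s = (1 / real N) *\<^sub>R (\<Sum>k<N. psi (norm (x i s - x k s)) *\<^sub>R (v k s - v i s))"

lemma ode_force: "i < N \<Longrightarrow> s \<in> {0..T} \<Longrightarrow> (v i has_vector_derivative force i s) (at s within {0..T})"
  unfolding force_def by (rule ode_v)

lemma continuous_on_x: "i < N \<Longrightarrow> continuous_on {0..T} (x i)"
  using ode_x has_vector_derivative_continuous continuous_on_eq_continuous_within by blast

lemma continuous_on_v: "i < N \<Longrightarrow> continuous_on {0..T} (v i)"
  using ode_force has_vector_derivative_continuous continuous_on_eq_continuous_within by blast

definition energy :: "real \<Rightarrow> real" where
  "energy s = (\<Sum>i<N. inner (v i s) (v i s))"

lemma force_dissipative: "(\<Sum>i<N. inner (v i s) (force i s)) \<le> 0"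
proof -
  have "(\<Sum>i<N. inner (v i s) (force i s)) =
      (1 / real N) * (\<Sum>i<N. \<Sum>k<N. psi (norm (x i s - x k s)) * inner (v i s) (v k s - v i s))"
    by (simp add: force_def inner_sum_right sum_distrib_left)
  also have "\<dots> \<le> 0"
    by (intro mult_nonneg_nonpos sum_sum_symmetric_inner_diff_nonpos)
      (auto simp: psi_nonneg norm_minus_commute)
  finally show ?thesis .
qed

lemma energy_deriv: "s \<in> {0..T} \<Longrightarrow>
    (energy has_real_derivative 2 * (\<Sum>i<N. inner (v i s) (force i s))) (at s within {0..T})"
proof -
  assume s: "s \<in> {0..T}"
  have "((\<lambda>s. \<Sum>i<N. inner (v i s) (v i s)) has_vector_derivative
      (\<Sum>i<N. inner (v i s) (force i s) + inner (force i s) (v i s))) (at s within {0..T})"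
    by (intro has_vector_derivative_sum
        bounded_bilinear.has_vector_derivative[OF bounded_bilinear_inner] ode_force s) auto
  then show ?thesis
    by (simp add: energy_def[abs_def] has_real_derivative_iff_has_vector_derivative inner_commute
        sum_distrib_left)
qed

lemma energy_le_initial: "s \<in> {0..T} \<Longrightarrow> energy s \<le> energy 0"
proof (rule DERIV_within_nonpos_imp_decreasing[of 0 s energy "\<lambda>r. 2 * (\<Sum>i<N. inner (v i r) (force i r))"])
  fix r assume "s \<in> {0..T}" "r \<in> {0..s}"
  then show "(energy has_real_derivative 2 * (\<Sum>i<N. inner (v i r) (force i r))) (at r within {0..s})"
    by (intro DERIV_subset[OF energy_deriv]) auto
qed (use force_dissipative in auto)

definition V :: real where "V = sqrt (energy 0)"

lemma norm_v_le: "i < N \<Longrightarrow> s \<in> {0..T} \<Longrightarrow> norm (v i s) \<le> V"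
proof -
  assume i: "i < N" and s: "s \<in> {0..T}"
  have "inner (v i s) (v i s) \<le> energy s"
    unfolding energy_def using i by (intro member_le_sum) auto
  then have "(norm (v i s))\<^sup>2 \<le> energy 0"
    using energy_le_initial[OF s] by (simp add: power2_norm_eq_inner)
  then show ?thesis
    unfolding V_def by (rule real_le_rsqrt)
qed

lemma V_nonneg: "0 \<le> V"
  unfolding V_def energy_def by (simp add: sum_nonneg)

lemma relative_force_term_le:
  assumes i: "i < N" and k: "k < N" and j: "j < N" and r: "r \<in> {0..T}"
  shows "psi (norm (x i r - x j r)) * inner (v i r - v k r) (v j r - v i r)
       - psi (norm (x k r - x j r)) * inner (v i r - v k r) (v j r - v k r)
       \<le> 2 * L * V * norm (x i r - x k r) * norm (v i r - v k r)"
proof -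
  define a where "a = psi (norm (x i r - x j r))"
  define b where "b = psi (norm (x k r - x j r))"
  define d where "d = v i r - v k r"
  define w where "w = v j r - v k r"
  have "a * inner d (v j r - v i r) - b * inner d w = (a - b) * inner d w - a * inner d d"
    unfolding d_def w_def by (simp add: inner_diff_right algebra_simps)
  have "0 \<le> a * inner d d"
    unfolding a_def by (simp add: psi_nonneg)
  have "\<bar>a - b\<bar> \<le> L * norm (x i r - x k r)"
  proof -
    have "\<bar>a - b\<bar> \<le> L * \<bar>norm (x i r - x j r) - norm (x k r - x j r)\<bar>"
      using lipschitz_on_normD[OF psi_lipschitz] unfolding a_def b_def by fastforce
    also have "\<dots> \<le> L * norm ((x i r - x j r) - (x k r - x j r))"
      using lipschitz_on_nonneg[OF psi_lipschitz] by (intro mult_left_mono norm_triangle_ineq3)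
    finally show ?thesis by simp
  qed
  have "norm w \<le> 2 * V"
    using norm_triangle_ineq4[of "v j r" "v k r"] norm_v_le[OF j r] norm_v_le[OF k r]
    unfolding w_def by linarith
  have "(a - b) * inner d w \<le> (L * norm (x i r - x k r)) * (norm d * (2 * V))"
  proof -
    have "\<bar>inner d w\<bar> \<le> norm d * (2 * V)"
      using Cauchy_Schwarz_ineq2[of d w] \<open>norm w \<le> 2 * V\<close>
      by (meson mult_left_mono norm_ge_zero order_trans)
    then have "\<bar>a - b\<bar> * \<bar>inner d w\<bar> \<le> (L * norm (x i r - x k r)) * (norm d * (2 * V))"
      using \<open>\<bar>a - b\<bar> \<le> L * norm (x i r - x k r)\<close> by (intro mult_mono) auto
    then show ?thesis
      by (metis abs_ge_self abs_mult order_trans)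
  qed
  then show ?thesis
    using \<open>a * inner d (v j r - v i r) - b * inner d w = _\<close> \<open>0 \<le> a * inner d d\<close>
    unfolding a_def b_def d_def w_def by (simp add: algebra_simps)
qed

lemma inner_relative_force_le:
  assumes i: "i < N" and k: "k < N" and r: "r \<in> {0..T}"
  shows "inner (v i r - v k r) (force i r - force k r)
    \<le> 2 * L * V * norm (x i r - x k r) * norm (v i r - v k r)"
proof -
  have "inner (v i r - v k r) (force i r - force k r) = (1 / real N) * (\<Sum>j<N.
      psi (norm (x i r - x j r)) * inner (v i r - v k r) (v j r - v i r)
       - psi (norm (x k r - x j r)) * inner (v i r - v k r) (v j r - v k r))"
    by (simp add: force_def inner_diff_right inner_sum_right sum_subtractf right_diff_distrib)
  also have "\<dots> \<le> (1 / real N) * (\<Sum>j<N. 2 * L * V * norm (x i r - x k r) * norm (v i r - v k r))"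
    by (intro mult_left_mono sum_mono relative_force_term_le i k r) auto
  also have "\<dots> = 2 * L * V * norm (x i r - x k r) * norm (v i r - v k r)"
    using N by simp
  finally show ?thesis .
qed

text \<open>The squared phase-space distance q of the two particles obeys q' \<le> K q; this is the only
  place where the (n-dependent) Lipschitz constant of psi enters.\<close>
lemma same_initial_imp_same_v:
  assumes i: "i < N" and k: "k < N" and "x i 0 = x k 0" and "v i 0 = v k 0"
    and s: "s \<in> {0..T}"
  shows "v i s = v k s"
proof -
  define dx where "dx r = x i r - x k r" for r
  define dv where "dv r = v i r - v k r" for r
  define q where "q r = inner (dx r) (dx r) + inner (dv r) (dv r)" for r
  define q' where "q' r = 2 * inner (dx r) (dv r) + 2 * inner (dv r) (force i r - force k r)" for r
  define K where "K = 1 + 2 * L * V"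
  have "q s \<le> 0"
  proof (rule gronwall_nonpos[of T q q' K])
    fix r assume r: "r \<in> {0..T}"
    have "(dx has_vector_derivative dv r) (at r within {0..T})"
      unfolding dx_def[abs_def] dv_def by (intro has_vector_derivative_diff ode_x i k r)
    moreover have "(dv has_vector_derivative (force i r - force k r)) (at r within {0..T})"
      unfolding dv_def[abs_def] by (intro has_vector_derivative_diff ode_force i k r)
    ultimately have "(q has_vector_derivative (inner (dx r) (dv r) + inner (dv r) (dx r))
        + (inner (dv r) (force i r - force k r) + inner (force i r - force k r) (dv r)))
        (at r within {0..T})"
      unfolding q_def[abs_def]
      by (intro has_vector_derivative_add bounded_bilinear.has_vector_derivative[OF bounded_bilinear_inner])
    then show "(q has_real_derivative q' r) (at r within {0..T})"
      unfolding has_real_derivative_iff_has_vector_derivative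
      by (rule has_vector_derivative_eq_rhs) (simp add: q'_def inner_commute)
    have "inner (dv r) (force i r - force k r) \<le> 2 * L * V * norm (dx r) * norm (dv r)"
      unfolding dx_def dv_def by (rule inner_relative_force_le[OF i k r])
    moreover have "inner (dx r) (dv r) \<le> norm (dx r) * norm (dv r)"
      by (rule norm_cauchy_schwarz)
    moreover have "2 * (norm (dx r) * norm (dv r)) \<le> inner (dx r) (dx r) + inner (dv r) (dv r)"
      using sum_squares_bound[of "norm (dx r)" "norm (dv r)"] by (simp add: power2_norm_eq_inner)
    moreover have "0 \<le> L * V"
      using lipschitz_on_nonneg[OF psi_lipschitz] V_nonneg by simp
    ultimately have "q' r \<le> (1 + 2 * L * V) * (2 * (norm (dx r) * norm (dv r)))"
      unfolding q'_def by (simp add: algebra_simps)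
    also have "\<dots> \<le> K * q r"
      unfolding K_def q_def using \<open>0 \<le> L * V\<close> \<open>2 * _ \<le> _\<close>
      by (intro mult_left_mono) auto
    finally show "q' r \<le> K * q r" .
  qed (use assms in \<open>auto simp: q_def dx_def dv_def\<close>)
  then have "inner (dv s) (dv s) \<le> 0"
    unfolding q_def using inner_ge_zero[of "dx s"] by linarith
  then have "dv s = 0"
    using inner_gt_zero_iff[of "dv s"] by linarith
  then show ?thesis
    by (simp add: dv_def)
qed

end

section \<open>Short-time estimates uniform in the kernel\<close>

text \<open>W bounds all speeds, c and d are the minimal nonzero distances of the initial velocities
  and positions, K is chosen so that the force is at most K r^(-\<alpha>), and t is short enough that
  distinct initial positions stay d/2 apart and the velocities move by at most c/8.\<close>

locale cucker_smale_short_time = cucker_smale N T psi L x v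
  for N :: nat and T :: real and psi :: "real \<Rightarrow> real" and L :: real
    and x v :: "nat \<Rightarrow> real \<Rightarrow> 'a::real_inner" +
  fixes \<alpha> c d W K t :: real and x0 v0 :: "nat \<Rightarrow> 'a"
  assumes alpha: "0 < \<alpha>" "\<alpha> < 1"
    and psi_le: "\<And>s. 0 < s \<Longrightarrow> psi s \<le> 2 * s powr (- \<alpha>)"
    and x_init: "\<And>i. i < N \<Longrightarrow> x i 0 = x0 i" and v_init: "\<And>i. i < N \<Longrightarrow> v i 0 = v0 i"
    and c: "0 < c" "\<And>i k. i < N \<Longrightarrow> k < N \<Longrightarrow> v0 i \<noteq> v0 k \<Longrightarrow> c \<le> norm (v0 i - v0 k)"
    and d: "0 < d" "\<And>i k. i < N \<Longrightarrow> k < N \<Longrightarrow> x0 i \<noteq> x0 k \<Longrightarrow> d \<le> norm (x0 i - x0 k)"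
    and V_le_W: "V \<le> W"
    and K: "4 * W * ((d / 2) powr (- \<alpha>) + (c / 2) powr (- \<alpha>)) \<le> K"
    and t: "0 < t" "t \<le> T" "t \<le> 1" "4 * W * t \<le> d" "K / (1 - \<alpha>) * t powr (1 - \<alpha>) \<le> c / 8"
begin

definition near_initial :: "real \<Rightarrow> bool" where
  "near_initial \<tau> \<longleftrightarrow> (\<forall>s\<in>{0..<\<tau>}. \<forall>i<N. norm (v i s - v0 i) \<le> c / 4)"

definition force_primitive :: "real \<Rightarrow> real" where
  "force_primitive r = K / (1 - \<alpha>) * r powr (1 - \<alpha>)"

lemma W_nonneg: "0 \<le> W"
  using V_nonneg V_le_W by linarith

lemma K_ge: "4 * W * (d / 2) powr (- \<alpha>) \<le> K" "4 * W * (c / 2) powr (- \<alpha>) \<le> K"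
  using K mult_nonneg_nonneg[OF W_nonneg, of "(c / 2) powr (- \<alpha>)"]
    mult_nonneg_nonneg[OF W_nonneg, of "(d / 2) powr (- \<alpha>)"]
  by (simp_all add: distrib_left)

lemma K_nonneg: "0 \<le> K"
  using K_ge(1) W_nonneg by (smt (verit) mult_nonneg_nonneg powr_ge_zero)

lemma norm_v_diff_le: "i < N \<Longrightarrow> k < N \<Longrightarrow> s \<in> {0..T} \<Longrightarrow> norm (v i s - v k s) \<le> 2 * W"
  using norm_triangle_ineq4[of "v i s" "v k s"] norm_v_le[of i s] norm_v_le[of k s] V_le_W
  by linarith

lemma psi_le_of_le: "0 < m \<Longrightarrow> m \<le> s \<Longrightarrow> psi s \<le> 2 * m powr (- \<alpha>)"
  using psi_le[of s] powr_mono2'[of "- \<alpha>" m s] alpha by simp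

lemma dist_ge_of_x0_ne:
  assumes i: "i < N" and k: "k < N" and "x0 i \<noteq> x0 k" and r: "r \<in> {0..t}"
  shows "d / 2 \<le> norm (x i r - x k r)"
proof -
  have "norm ((x i r - x k r) - (x i 0 - x k 0)) \<le> 2 * W * r - 2 * W * 0"
  proof (rule norm_increment_le_comparison[where f' = "\<lambda>s. v i s - v k s"])
    show "continuous_on {0..r} (\<lambda>s. x i s - x k s)"
      using r t continuous_on_x[OF i] continuous_on_x[OF k]
      by (intro continuous_intros) (auto elim: continuous_on_subset)
    fix s assume s: "0 < s" "s < r"
    then show "((\<lambda>s. x i s - x k s) has_vector_derivative v i s - v k s) (at s)"
      using r t ode_x[OF i, of s] ode_x[OF k, of s]
      by (auto simp: at_within_Icc_at intro!: has_vector_derivative_diff)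
    show "norm (v i s - v k s) \<le> 2 * W"
      using s r t by (intro norm_v_diff_le i k) auto
  qed (use r in \<open>auto intro!: derivative_eq_intros continuous_intros\<close>)
  also have "\<dots> \<le> d / 2"
    using mult_left_mono[of r t "4 * W"] r t W_nonneg by auto
  finally have "norm ((x i r - x k r) - (x0 i - x0 k)) \<le> d / 2"
    using x_init i k by simp
  moreover have "d \<le> norm (x0 i - x0 k)"
    using d(2) i k assms(3) .
  ultimately show ?thesis
    using norm_triangle_ineq2[of "x0 i - x0 k" "x i r - x k r"] by (simp add: norm_minus_commute)
qed

lemma dist_ge_of_v0_ne:
  assumes i: "i < N" and k: "k < N" and "x0 i = x0 k" "v0 i \<noteq> v0 k"
    and near: "near_initial \<tau>" and "\<tau> \<le> t" and r: "r \<in> {0..\<tau>}"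
  shows "c / 2 * r \<le> norm (x i r - x k r)"
proof -
  define u where "u = v0 i - v0 k"
  have "norm ((x i r - x k r - r *\<^sub>R u) - (x i 0 - x k 0 - 0 *\<^sub>R u)) \<le> c / 2 * r - c / 2 * 0"
  proof (rule norm_increment_le_comparison[where f' = "\<lambda>s. (v i s - v k s) - u"])
    show "continuous_on {0..r} (\<lambda>s. x i s - x k s - s *\<^sub>R u)"
      using r \<open>\<tau> \<le> t\<close> t continuous_on_x[OF i] continuous_on_x[OF k]
      by (intro continuous_intros) (auto elim: continuous_on_subset)
    fix s assume s: "0 < s" "s < r"
    then show "((\<lambda>s. x i s - x k s - s *\<^sub>R u) has_vector_derivative (v i s - v k s) - u) (at s)"
      using r \<open>\<tau> \<le> t\<close> t ode_x[OF i, of s] ode_x[OF k, of s]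
      by (auto simp: at_within_Icc_at intro!: derivative_eq_intros)
    have "norm (v i s - v0 i) \<le> c / 4" "norm (v k s - v0 k) \<le> c / 4"
      using near s r i k unfolding near_initial_def by auto
    then show "norm ((v i s - v k s) - u) \<le> c / 2"
      using norm_triangle_ineq4[of "v i s - v0 i" "v k s - v0 k"] by (simp add: u_def algebra_simps)
  qed (use r in \<open>auto intro!: derivative_eq_intros continuous_intros\<close>)
  then have "norm ((x i r - x k r) - r *\<^sub>R u) \<le> c / 2 * r"
    using x_init i k \<open>x0 i = x0 k\<close> by simp
  moreover have "c * r \<le> norm u * r"
    using c(2)[OF i k \<open>v0 i \<noteq> v0 k\<close>] r by (intro mult_right_mono) (auto simp: u_def)
  then have "c * r \<le> norm (r *\<^sub>R u)"
    using r by (simp add: mult.commute)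
  ultimately show ?thesis
    using norm_triangle_ineq2[of "r *\<^sub>R u" "x i r - x k r"] by (simp add: norm_minus_commute)
qed

lemma pair_force_le:
  assumes near: "near_initial \<tau>" and "\<tau> \<le> t" and r: "0 < r" "r \<le> \<tau>" and i: "i < N" and k: "k < N"
  shows "psi (norm (x i r - x k r)) * norm (v k r - v i r) \<le> K * r powr (- \<alpha>)"
proof -
  have rT: "r \<in> {0..T}" "r \<le> 1"
    using r \<open>\<tau> \<le> t\<close> t by auto
  have v_diff: "norm (v k r - v i r) \<le> 2 * W"
    by (rule norm_v_diff_le[OF k i rT(1)])
  have psi_pair_nonneg: "0 \<le> psi (norm (x i r - x k r))"
    by (simp add: psi_nonneg)
  consider "x0 i \<noteq> x0 k" | "x0 i = x0 k" "v0 i \<noteq> v0 k" | "x0 i = x0 k" "v0 i = v0 k"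
    by blast
  then show ?thesis
  proof cases
    case 1
    have "psi (norm (x i r - x k r)) * norm (v k r - v i r) \<le> (2 * (d / 2) powr (- \<alpha>)) * (2 * W)"
      using dist_ge_of_x0_ne[OF i k 1] r \<open>\<tau> \<le> t\<close> d(1) v_diff psi_pair_nonneg
      by (intro mult_mono psi_le_of_le) auto
    also have "\<dots> = (4 * W * (d / 2) powr (- \<alpha>)) * 1"
      by simp
    also have "\<dots> \<le> (4 * W * (d / 2) powr (- \<alpha>)) * r powr (- \<alpha>)"
      using W_nonneg powr_mono2'[of "- \<alpha>" r 1] r rT alpha by (intro mult_left_mono) auto
    also have "\<dots> \<le> K * r powr (- \<alpha>)"
      using K_ge by (intro mult_right_mono) auto
    finally show ?thesis .
  next
    case 2
    have "psi (norm (x i r - x k r)) * norm (v k r - v i r) \<le> (2 * (c / 2 * r) powr (- \<alpha>)) * (2 * W)"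
      using dist_ge_of_v0_ne[OF i k 2 near \<open>\<tau> \<le> t\<close>] r c(1) v_diff psi_pair_nonneg
      by (intro mult_mono psi_le_of_le) auto
    also have "\<dots> = (4 * W * (c / 2) powr (- \<alpha>)) * r powr (- \<alpha>)"
      using powr_mult[of "c / 2" r "- \<alpha>"] c(1) r by simp
    also have "\<dots> \<le> K * r powr (- \<alpha>)"
      using K_ge by (intro mult_right_mono) auto
    finally show ?thesis .
  next
    case 3
    then have "v i r = v k r"
      using same_initial_imp_same_v[OF i k _ _ rT(1)] x_init v_init i k by simp
    then show ?thesis
      using K_nonneg by simp
  qed
qed

lemma norm_force_le:
  assumes "near_initial \<tau>" "\<tau> \<le> t" "0 < r" "r \<le> \<tau>" and i: "i < N"
  shows "norm (force i r) \<le> K * r powr (- \<alpha>)"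
proof -
  have "norm (force i r) = (1 / real N) * norm (\<Sum>k<N. psi (norm (x i r - x k r)) *\<^sub>R (v k r - v i r))"
    by (simp add: force_def)
  also have "\<dots> \<le> (1 / real N) * (\<Sum>k<N. norm (psi (norm (x i r - x k r)) *\<^sub>R (v k r - v i r)))"
    by (intro mult_left_mono norm_sum) auto
  also have "\<dots> \<le> (1 / real N) * (\<Sum>k<N. K * r powr (- \<alpha>))"
    using pair_force_le[OF assms(1-4) i] by (intro mult_left_mono sum_mono) (auto simp: psi_nonneg)
  also have "\<dots> = K * r powr (- \<alpha>)"
    using N by simp
  finally show ?thesis .
qed

lemma v_increment_le:
  assumes "near_initial \<tau>" "\<tau> \<le> t" and i: "i < N" and s: "0 \<le> s'" "s' \<le> s" "s \<le> \<tau>"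
  shows "norm (v i s - v i s') \<le> force_primitive s - force_primitive s'"
proof (rule norm_increment_le_comparison[where f' = "force i" and g' = "\<lambda>r. K * r powr (- \<alpha>)"])
  show "continuous_on {s'..s} (v i)"
    using s assms(2) t by (intro continuous_on_subset[OF continuous_on_v[OF i]]) auto
  show "continuous_on {s'..s} force_primitive"
    unfolding force_primitive_def using s alpha by (intro continuous_intros continuous_on_powr') auto
  fix r assume r: "s' < r" "r < s"
  then have r0: "0 < r" "r < T"
    using s assms(2) t by auto
  show "(v i has_vector_derivative force i r) (at r)"
    using ode_force[OF i, of r] r0 by (simp add: at_within_Icc_at)
  have "((\<lambda>r. K / (1 - \<alpha>) * r powr (1 - \<alpha>)) has_real_derivative
      K / (1 - \<alpha>) * ((1 - \<alpha>) * r powr (1 - \<alpha> - 1))) (at r)"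
    by (intro DERIV_cmult has_real_derivative_powr r0)
  then show "(force_primitive has_real_derivative K * r powr (- \<alpha>)) (at r)"
    unfolding force_primitive_def[abs_def] using alpha by simp
  show "norm (force i r) \<le> K * r powr (- \<alpha>)"
    using r s by (intro norm_force_le[OF assms(1,2)] i) auto
qed fact

lemma near_initial_t: "near_initial t"
proof (rule ccontr)
  assume "\<not> near_initial t"
  then obtain s i where si: "i \<in> {..<N}" "s \<in> {0..t}" "c / 4 \<le> norm (v i s - v0 i)"
    unfolding near_initial_def by force
  have "continuous_on {0..t} (\<lambda>s. norm (v j s - v0 j))" if "j \<in> {..<N}" for j
    using that t by (intro continuous_intros continuous_on_subset[OF continuous_on_v]) auto
  from first_hitting_time[where f = "\<lambda>j s. norm (v j s - v0 j)", OF finite_lessThan this si]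
  obtain \<tau> j where \<tau>: "\<tau> \<in> {0..t}" and j: "j < N" "c / 4 \<le> norm (v j \<tau> - v0 j)"
    and before: "\<forall>s\<in>{0..<\<tau>}. \<forall>i\<in>{..<N}. norm (v i s - v0 i) < c / 4"
    by auto
  have "near_initial \<tau>"
    unfolding near_initial_def using before by (auto intro: less_imp_le)
  then have "norm (v j \<tau> - v j 0) \<le> force_primitive \<tau> - force_primitive 0"
    using \<tau> by (intro v_increment_le j) auto
  also have "\<dots> = force_primitive \<tau>"
    by (simp add: force_primitive_def)
  also have "\<dots> \<le> force_primitive t"
    unfolding force_primitive_def using \<tau> alpha K_nonneg
    by (intro mult_left_mono powr_mono2) auto
  also have "\<dots> \<le> c / 8"
    using t(5) by (simp add: force_primitive_def)
  finally show False
    using j v_init c(1) by simp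
qed

lemma v_holder:
  assumes i: "i < N" and s: "s \<in> {0..t}" and s': "s' \<in> {0..t}"
  shows "norm (v i s - v i s') \<le> K / (1 - \<alpha>) * \<bar>s - s'\<bar> powr (1 - \<alpha>)"
proof -
  have *: "norm (v i b - v i a) \<le> K / (1 - \<alpha>) * (b - a) powr (1 - \<alpha>)"
    if "0 \<le> a" "a \<le> b" "b \<le> t" for a b
  proof -
    have "norm (v i b - v i a) \<le> force_primitive b - force_primitive a"
      using near_initial_t that by (intro v_increment_le i) auto
    also have "\<dots> = K / (1 - \<alpha>) * (b powr (1 - \<alpha>) - a powr (1 - \<alpha>))"
      by (simp add: force_primitive_def algebra_simps)
    also have "\<dots> \<le> K / (1 - \<alpha>) * (b - a) powr (1 - \<alpha>)"
      using K_nonneg alpha that by (intro mult_left_mono powr_diff_le_powr_diff) auto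
    finally show ?thesis .
  qed
  show ?thesis
    using *[of s' s] *[of s s'] s s'
    by (cases "s' \<le> s") (auto simp: norm_minus_commute abs_minus_commute)
qed

end

theorem lemma2p1:
  fixes N :: nat and T \<alpha> :: real
    and psi :: "nat \<Rightarrow> real \<Rightarrow> real"
    and x0 v0 :: "nat \<Rightarrow> real ^ 'd"
    and x v :: "nat \<Rightarrow> nat \<Rightarrow> real \<Rightarrow> real ^ 'd"
  assumes N: "N \<ge> 1" and T: "T > 0"
    and alpha: "0 < \<alpha>" "\<alpha> < 1"
    and psi_far: "\<And>n s. n \<ge> 2 \<Longrightarrow> s \<ge> (real n - 1) powr (- 1 / \<alpha>) \<Longrightarrow> psi n s = s powr (- \<alpha>)"
    and psi_near: "\<And>n s. n \<ge> 2 \<Longrightarrow> 0 \<le> s \<Longrightarrow> s \<le> real n powr (- 1 / \<alpha>) \<Longrightarrow> psi n s = real n"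
    and psi_smooth: "\<And>n. n \<ge> 2 \<Longrightarrow>
          smooth_on {real n powr (- 1 / \<alpha>) .. (real n - 1) powr (- 1 / \<alpha>)} (psi n)"
    and psi_mono: "\<And>n. n \<ge> 2 \<Longrightarrow>
          antimono_on {real n powr (- 1 / \<alpha>) .. (real n - 1) powr (- 1 / \<alpha>)} (psi n)"
    and init_x: "\<And>n i. n \<ge> 2 \<Longrightarrow> i < N \<Longrightarrow> x n i 0 = x0 i"
    and init_v: "\<And>n i. n \<ge> 2 \<Longrightarrow> i < N \<Longrightarrow> v n i 0 = v0 i"
    and ode_x: "\<And>n i s. n \<ge> 2 \<Longrightarrow> i < N \<Longrightarrow> s \<in> {0..T} \<Longrightarrow>
          (x n i has_vector_derivative v n i s) (at s within {0..T})"
    and ode_v: "\<And>n i s. n \<ge> 2 \<Longrightarrow> i < N \<Longrightarrow> s \<in> {0..T} \<Longrightarrow>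
          (v n i has_vector_derivative
             (1 / real N) *\<^sub>R (\<Sum>k<N. psi n (norm (x n i s - x n k s)) *\<^sub>R (v n k s - v n i s)))
          (at s within {0..T})"
  shows "\<exists>t>0. t \<le> T \<and> (\<exists>\<gamma> C. 0 < \<gamma> \<and> \<gamma> \<le> 1 \<and>
           (\<forall>n\<ge>2. \<forall>i<N. \<forall>s\<in>{0..t}. \<forall>s'\<in>{0..t}.
              norm (v n i s - v n i s') \<le> C * \<bar>s - s'\<bar> powr \<gamma>))"
proof -
  obtain c where c: "0 < c" "\<forall>i<N. \<forall>k<N. v0 i \<noteq> v0 k \<longrightarrow> c \<le> norm (v0 i - v0 k)"
    using ex_pos_le_norm_diff by blast
  obtain d where d: "0 < d" "\<forall>i<N. \<forall>k<N. x0 i \<noteq> x0 k \<longrightarrow> d \<le> norm (x0 i - x0 k)"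
    using ex_pos_le_norm_diff by blast
  define W where "W = sqrt (\<Sum>i<N. inner (v0 i) (v0 i))"
  define K where "K = 4 * W * ((d / 2) powr (- \<alpha>) + (c / 2) powr (- \<alpha>))"
  obtain t where t: "0 < t" "t \<le> T" "t \<le> 1" "4 * W * t \<le> d" "K / (1 - \<alpha>) * t powr (1 - \<alpha>) \<le> c / 8"
    using ex_short_time[of T "1 - \<alpha>" "c / 8" d "4 * W" "K / (1 - \<alpha>)"] T alpha c d by auto
  have "norm (v n i s - v n i s') \<le> K / (1 - \<alpha>) * \<bar>s - s'\<bar> powr (1 - \<alpha>)"
    if n: "2 \<le> n" and "i < N" "s \<in> {0..t}" "s' \<in> {0..t}" for n i s s'
  proof -
    interpret kernel: cutoff_kernel \<alpha> "psi n" n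
      using alpha n psi_far psi_near psi_smooth psi_mono by unfold_locales auto
    obtain L where L: "L-lipschitz_on {0..} (psi n)"
      using kernel.lipschitz by blast
    interpret cucker_smale N T "psi n" L "x n" "v n"
      using N kernel.nonneg L ode_x[OF n] ode_v[OF n] by unfold_locales auto
    have "V = W"
      unfolding V_def energy_def W_def using init_v[OF n] by simp
    interpret cucker_smale_short_time N T "psi n" L "x n" "v n" \<alpha> c d W K t x0 v0
      using alpha kernel.le_twice_powr init_x[OF n] init_v[OF n] c d \<open>V = W\<close> t
      by unfold_locales (auto simp: K_def)
    show ?thesis
      using v_holder that by blast
  qed
  then show ?thesis
    using t alpha by (intro exI[of _ t] conjI exI[of _ "1 - \<alpha>"] exI[of _ "K / (1 - \<alpha>)"]) auto
qed

end
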